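(* Let $\theta\in(0,\pi)$ and let $z$ be a real number with $z>-\csc(\theta)$. Suppose real numbers $\lambda_1,\lambda_2,\lambda_3$ satisfy \[ \lambda_1\lambda_2\lambda_3=\csc^2(\theta)\,(\lambda_1+\lambda_2+\lambda_3+2z),\qquad \lambda_i>0\ \ (i=1,2,3),\qquad \lambda_i\lambda_j>\csc^2(\theta)\ \ (i\ne j). \] Then $g:=\sum_{i<j}\lambda_i\lambda_j+2z\sum_i\lambda_i+3z^2>0$. *)

theory Defs
  imports Complex_Main
begin

definition csc :: "real \<Rightarrow> real" where
  "csc x = 1 / sin x"

end

theory Submission
  imports Defs
begin

text \<open>Write \<open>k = csc\<^sup>2 \<theta>\<close>, \<open>u = \<lambda>\<^sub>2\<lambda>\<^sub>3\<close> and \<open>t = \<lambda>\<^sub>2 + \<lambda>\<^sub>3\<close>. Eliminating \<open>\<lambda>\<^sub>1\<close> by means of the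
  constraint \<open>\<lambda>\<^sub>1 (u - k) = k (t + 2z)\<close> turns \<open>k (u - k) g\<close> into the sum of the square
  \<open>(k t + z (u + k))\<^sup>2\<close> and \<open>u (u - k) (k - z\<^sup>2)\<close>, which is positive as soon as \<open>u > k > z\<^sup>2\<close>.
  Since \<open>g > 0\<close> is obvious for \<open>z \<ge> 0\<close>, and \<open>-csc \<theta> < z < 0\<close> gives \<open>z\<^sup>2 < k\<close>, this covers
  every case.\<close>

lemma constrained_quadratic_identity:
  fixes k z l1 l2 l3 :: real
  assumes "l1 * l2 * l3 = k * (l1 + l2 + l3 + 2 * z)"
  shows "k * (l2 * l3 - k) * (l1 * l2 + l1 * l3 + l2 * l3 + 2 * z * (l1 + l2 + l3) + 3 * z^2)
    = (k * (l2 + l3) + z * (l2 * l3 + k))^2 + l2 * l3 * (l2 * l3 - k) * (k - z^2)"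
proof -
  have l1: "l1 * (l2 * l3 - k) = k * (l2 + l3 + 2 * z)"
    using assms by (simp add: algebra_simps)
  have "k * (l2 * l3 - k) * (l1 * l2 + l1 * l3 + l2 * l3 + 2 * z * (l1 + l2 + l3) + 3 * z^2)
      = k * (l1 * (l2 * l3 - k)) * (l2 + l3 + 2 * z)
        + k * (l2 * l3 - k) * (l2 * l3 + 2 * z * (l2 + l3) + 3 * z^2)"
    by (simp add: algebra_simps power2_eq_square)
  also have "\<dots> = (k * (l2 + l3) + z * (l2 * l3 + k))^2 + l2 * l3 * (l2 * l3 - k) * (k - z^2)"
    unfolding l1 by (simp add: algebra_simps power2_eq_square)
  finally show ?thesis .
qed

lemma constrained_quadratic_pos:
  fixes k z l1 l2 l3 :: real
  assumes "l1 * l2 * l3 = k * (l1 + l2 + l3 + 2 * z)"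
    and "l2 * l3 > k" and "z^2 < k"
  shows "l1 * l2 + l1 * l3 + l2 * l3 + 2 * z * (l1 + l2 + l3) + 3 * z^2 > 0"
proof -
  have k: "k > 0"
    using assms(3) zero_le_power2[of z] by linarith
  have "l2 * l3 * (l2 * l3 - k) * (k - z^2) > 0"
    using assms(2,3) k by simp
  then have "k * (l2 * l3 - k) * (l1 * l2 + l1 * l3 + l2 * l3 + 2 * z * (l1 + l2 + l3) + 3 * z^2) > 0"
    unfolding constrained_quadratic_identity[OF assms(1)]
    by (simp add: add_nonneg_pos)
  moreover have "k * (l2 * l3 - k) > 0"
    using assms(2) k by simp
  ultimately show ?thesis
    by (rule zero_less_mult_pos)
qed

theorem lemma3p5:
  fixes \<theta> z l1 l2 l3 :: real
  assumes "0 < \<theta>" and "\<theta> < pi"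
    and "z > - csc \<theta>"
    and "l1 * l2 * l3 = (csc \<theta>)^2 * (l1 + l2 + l3 + 2 * z)"
    and "l1 > 0" and "l2 > 0" and "l3 > 0"
    and "l1 * l2 > (csc \<theta>)^2" and "l1 * l3 > (csc \<theta>)^2" and "l2 * l3 > (csc \<theta>)^2"
  shows "l1 * l2 + l1 * l3 + l2 * l3 + 2 * z * (l1 + l2 + l3) + 3 * z^2 > 0"
proof (cases "z \<ge> 0")
  case True
  then show ?thesis
    using assms(5-7) by (simp add: add_pos_nonneg add_pos_pos)
next
  case False
  have "z^2 < (csc \<theta>)^2"
    using False assms(3) by (simp add: power_strict_mono[of "-z" "csc \<theta>" 2, simplified])
  then show ?thesis
    using constrained_quadratic_pos assms(4,10) by blast
qed

end
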